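(* Let $I=1$ and let $\mathbf s_{T,u}^{\mathrm T}$ denote the $u$-th row of $\mathbf S_T$ for some $u\in\{1,\dots,U\}$. Suppose the jammer transmits $\mathbf w_T=\mathbf s_{T,u}$ during the pilot phase and some fixed $\mathbf w_D\in\mathcal S^D$ during the data phase (so $\|\mathbf w_D\|_0=D$). If $\mathbf S_D$ is uniformly distributed on $\mathcal S^{U\times D}$, then the jammer is eclipsed (with channel estimation) with probability at least $1-4^{-D}$.
   Context: Let $U,T,D$ be positive integers with $T\ge U$, $\mathcal S=\{(\pm1\pm i)/\sqrt2\}\subset\mathbb C$ (QPSK), and $\mathbf S_T\in\mathbb C^{U\times T}$ a fixed pilot matrix of full row rank $U$; $\mathbf A^\dagger$ is the Moore–Penrose pseudoinverse. Eclipsing with channel estimation (single-antenna case): given $\mathbf S_D\in\mathcal S^{U\times D}$, $\mathbf w_T\in\mathbb C^T$, $\mathbf w_D\in\mathbb C^D$, the jammer is eclipsed if there exists $\tilde{\mathbf S}_D\in\mathcal S^{U\times D}\setminus\{\mathbf S_D\}$ such that $\begin{bmatrix}\mathbf S_D-\tilde{\mathbf S}_D\\ \mathbf w_D^{\mathrm T}-\mathbf w_T^{\mathrm T}\mathbf S_T^\dagger\tilde{\mathbf S}_D\end{bmatrix}$ has rank at most $1$. *)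

theory Defs
  imports "HOL-Analysis.Analysis" "HOL-Probability.Probability"
begin

text \<open>Matrices are Cartesian-product types: a U x T complex matrix is complex^'t^'u
  (rows indexed by 'u, columns by 't). Dimensions U = CARD('u), T = CARD('t), D = CARD('d).\<close>

definition conj_transpose :: "complex^'n^'m \<Rightarrow> complex^'m^'n" where
  "conj_transpose A = (\<chi> i j. cnj (A $ j $ i))"

definition penrose :: "complex^'n^'m \<Rightarrow> complex^'m^'n \<Rightarrow> bool" where
  "penrose A X \<longleftrightarrow> A ** X ** A = A \<and> X ** A ** X = X \<and>
     conj_transpose (A ** X) = A ** X \<and> conj_transpose (X ** A) = X ** A"

definition pinv :: "complex^'n^'m \<Rightarrow> complex^'m^'n" where
  "pinv A = (THE X. penrose A X)"

definition QPSK :: "complex set" where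
  "QPSK = {(a + b * \<i>) / complex_of_real (sqrt 2) | a b. a \<in> {-1, 1} \<and> b \<in> {-1, 1}}"

definition qpsk_vecs :: "(complex^'d) set" where
  "qpsk_vecs = {w. \<forall>j. w $ j \<in> QPSK}"

definition qpsk_mats :: "(complex^'d^'u) set" where
  "qpsk_mats = {S. \<forall>i j. S $ i $ j \<in> QPSK}"

text \<open>Stack a U x D matrix on top of a row of length D: a (U+1) x D matrix, the extra
  (last) row being indexed by None.\<close>
definition stack_row :: "'a^'d^'u \<Rightarrow> 'a^'d \<Rightarrow> 'a^'d^('u option)" where
  "stack_row A r = (\<chi> i. case i of Some k \<Rightarrow> A $ k | None \<Rightarrow> r)"

definition eclipsed :: "complex^'t^'u \<Rightarrow> complex^'t \<Rightarrow> complex^'d \<Rightarrow> complex^'d^'u \<Rightarrow> bool" where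
  "eclipsed S_T w_T w_D S_D \<longleftrightarrow>
     (\<exists>S'. S' \<in> qpsk_mats \<and> S' \<noteq> S_D \<and>
        rank (stack_row (S_D - S') (w_D - (w_T v* pinv S_T) v* S')) \<le> 1)"

end

theory Submission
  imports Defs
begin

text \<open>Since \<open>S\<^sub>T\<close> has full row rank, \<open>S\<^sub>T\<^sup>\<dagger> = S\<^sub>T\<^sup>H (S\<^sub>T S\<^sub>T\<^sup>H)\<^sup>-\<^sup>1\<close> is a right inverse of \<open>S\<^sub>T\<close>,
  so the jammer's pilot \<open>s\<^sub>T\<^sub>,\<^sub>u\<close> is estimated as the channel of user \<open>u\<close>:
  \<open>s\<^sub>T\<^sub>,\<^sub>u\<^sup>T S\<^sub>T\<^sup>\<dagger> = e\<^sub>u\<^sup>T\<close>. Replacing the \<open>u\<close>-th row of \<open>S\<^sub>D\<close> by \<open>w\<^sub>D\<close> then makes the last row of the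
  stacked matrix vanish and leaves a single nonzero row above it, so the matrix has rank at most 1.
  This alternative differs from \<open>S\<^sub>D\<close> unless the \<open>u\<close>-th row of \<open>S\<^sub>D\<close> already equals \<open>w\<^sub>D\<close>,
  an event of probability \<open>4\<^sup>-\<^sup>D\<close>.\<close>

lemma conj_transpose_matrix_mult:
  "conj_transpose (A ** B) = conj_transpose B ** conj_transpose (A :: complex^'n^'m)"
  by (simp add: conj_transpose_def matrix_matrix_mult_def vec_eq_iff cnj_sum mult.commute)

lemma conj_transpose_conj_transpose [simp]: "conj_transpose (conj_transpose A) = (A :: complex^'n^'m)"
  by (simp add: conj_transpose_def vec_eq_iff)

lemma conj_transpose_mat_1 [simp]: "conj_transpose (mat 1 :: complex^'n^'n) = mat 1"
  by (simp add: conj_transpose_def vec_eq_iff mat_def)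

lemma penrose_unique:
  assumes "penrose A X" "penrose A Y"
  shows "X = Y"
proof -
  let ?H = conj_transpose
  have X: "A ** X ** A = A" "X ** A ** X = X" "?H (A ** X) = A ** X" "?H (X ** A) = X ** A"
    using assms(1) by (auto simp: penrose_def)
  have Y: "A ** Y ** A = A" "Y ** A ** Y = Y" "?H (A ** Y) = A ** Y" "?H (Y ** A) = Y ** A"
    using assms(2) by (auto simp: penrose_def)
  have "X = X ** (A ** X)" using X by (simp add: matrix_mul_assoc)
  also have "\<dots> = X ** (?H X ** ?H A)" using X by (metis conj_transpose_matrix_mult)
  also have "\<dots> = X ** (?H X ** ?H (A ** Y ** A))" using Y by simp
  also have "\<dots> = X ** (?H (A ** X) ** ?H (A ** Y))"
    by (simp add: conj_transpose_matrix_mult matrix_mul_assoc)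
  also have "\<dots> = X ** A ** Y" using X Y by (simp add: matrix_mul_assoc)
  finally have XAY: "X = X ** A ** Y" .
  have "Y = (Y ** A) ** Y" using Y by simp
  also have "\<dots> = (?H A ** ?H Y) ** Y" using Y by (metis conj_transpose_matrix_mult)
  also have "\<dots> = (?H (A ** X ** A) ** ?H Y) ** Y" using X by simp
  also have "\<dots> = (?H (X ** A) ** ?H (Y ** A)) ** Y"
    by (simp add: conj_transpose_matrix_mult matrix_mul_assoc)
  also have "\<dots> = X ** A ** Y ** A ** Y" using X Y by (simp add: matrix_mul_assoc)
  also have "\<dots> = X ** A ** Y" using Y by (metis matrix_mul_assoc)
  finally show ?thesis using XAY by simp
qed

lemma pinv_eqI: "penrose A X \<Longrightarrow> pinv A = X"
  unfolding pinv_def using penrose_unique by blast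

lemma vector_matrix_mult_eq_sum_rows:
  "x v* (A :: 'a::comm_semiring_1^'n^'m) = (\<Sum>i\<in>UNIV. x $ i *s row i A)"
  by (simp add: vec_eq_iff vector_matrix_mult_def row_def sum_component mult.commute)

lemma full_row_rank_vector_matrix_mult_eq_0:
  fixes A :: "'a::field^'n^'m"
  assumes rank: "rank A = CARD('m)" and x: "x v* A = 0"
  shows "x = 0"
proof (rule ccontr)
  assume "x \<noteq> 0"
  let ?r = "\<lambda>i. row i A"
  have rows: "rows A = range ?r" by (auto simp: rows_def)
  have "vec.dim (rows A) \<le> card (rows A)"
    by (intro vec.dim_le_card) (auto simp: rows intro: vec.span_base)
  moreover have "card (rows A) \<le> CARD('m)" unfolding rows by (rule card_image_le) simp
  ultimately have card_rows: "card (rows A) = CARD('m)" "card (rows A) = vec.dim (rows A)"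
    using rank by (auto simp: row_rank_def_gen)
  have inj: "inj ?r" using card_rows(1) unfolding rows by (simp add: inj_on_iff_eq_card)
  have indep: "vec.independent (rows A)"
    using vec.card_eq_dim[of "rows A" "rows A"] card_rows(2) by (auto simp: rows intro: vec.span_base)
  define c where "c v = x $ inv ?r v" for v
  have "(\<Sum>v\<in>rows A. c v *s v) = (\<Sum>i\<in>UNIV. x $ i *s ?r i)"
    unfolding rows by (simp add: sum.reindex[OF inj] c_def inv_f_f[OF inj])
  also have "\<dots> = 0" using x by (simp add: vector_matrix_mult_eq_sum_rows)
  finally have "(\<Sum>v\<in>rows A. c v *s v) = 0" .
  moreover obtain i where "x $ i \<noteq> 0" using \<open>x \<noteq> 0\<close> by (auto simp: vec_eq_iff)
  then have "\<exists>v\<in>rows A. c v \<noteq> 0" by (auto simp: rows c_def inv_f_f[OF inj])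
  ultimately have "vec.dependent (rows A)" using vec.dependent_finite[of "rows A"] by (auto simp: rows)
  with indep show False by simp
qed

lemma sum_mult_cnj_eq_0_imp_eq_0:
  assumes "(\<Sum>j\<in>UNIV. y $ j * cnj (y $ j)) = 0"
  shows "y = 0"
proof -
  have "(\<Sum>j\<in>UNIV. complex_of_real ((norm (y $ j))\<^sup>2)) = 0"
    using assms by (simp only: complex_norm_square)
  then have "(\<Sum>j\<in>UNIV. (norm (y $ j))\<^sup>2) = 0"
    by (metis of_real_eq_0_iff of_real_sum)
  then show ?thesis by (simp add: sum_nonneg_eq_0_iff vec_eq_iff)
qed

text \<open>The Gram matrix \<open>A A\<^sup>H\<close> of a full-row-rank matrix is injective: \<open>A A\<^sup>H x = 0\<close> gives
  \<open>\<parallel>A\<^sup>H x\<parallel>\<^sup>2 = x\<^sup>H A A\<^sup>H x = 0\<close>, and \<open>A\<^sup>H x = 0\<close> says that \<open>cnj x\<close> is in the left kernel of \<open>A\<close>.\<close>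

lemma full_row_rank_gram_matrix_vector_mult_eq_0:
  fixes A :: "complex^'n^'m"
  assumes rank: "rank A = CARD('m)" and x: "(A ** conj_transpose A) *v x = 0"
  shows "x = 0"
proof -
  define y where "y = conj_transpose A *v x"
  define x' where "x' = (\<chi> i. cnj (x $ i))"
  have Ay: "A *v y = 0" using x by (simp add: y_def matrix_vector_mul_assoc)
  have x'A: "x' v* A = (\<chi> j. cnj (y $ j))"
    by (simp add: vec_eq_iff x'_def y_def vector_matrix_mult_def matrix_vector_mult_def
        conj_transpose_def cnj_sum mult.commute)
  have "(\<Sum>j\<in>UNIV. (x' v* A) $ j * y $ j) = (\<Sum>j\<in>UNIV. \<Sum>i\<in>UNIV. x' $ i * (A $ i $ j * y $ j))"
    by (simp add: vector_matrix_mult_def sum_distrib_left sum_distrib_right ac_simps)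
  also have "\<dots> = (\<Sum>i\<in>UNIV. x' $ i * (A *v y) $ i)"
    by (subst sum.swap) (simp add: matrix_vector_mult_def sum_distrib_left)
  also have "\<dots> = 0" by (simp add: Ay)
  finally have "y = 0"
    by (intro sum_mult_cnj_eq_0_imp_eq_0) (simp add: x'A mult.commute)
  then have "x' v* A = 0" by (simp add: x'A vec_eq_iff)
  then have "x' = 0" using full_row_rank_vector_matrix_mult_eq_0[OF rank] by blast
  then show "x = 0" by (simp add: x'_def vec_eq_iff)
qed

lemma full_row_rank_matrix_mult_pinv:
  fixes A :: "complex^'n^'m"
  assumes rank: "rank A = CARD('m)"
  shows "A ** pinv A = mat 1"
proof -
  let ?H = conj_transpose
  define G where "G = A ** ?H A"
  have "\<exists>M. M ** G = mat 1"
    unfolding matrix_left_invertible_ker G_def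
    using full_row_rank_gram_matrix_vector_mult_eq_0[OF rank] by blast
  then obtain M where M: "M ** G = mat 1" by blast
  then have GM: "G ** M = mat 1" by (simp add: matrix_left_right_inverse)
  have "G ** ?H M = mat 1"
    using M by (metis G_def conj_transpose_matrix_mult conj_transpose_mat_1 conj_transpose_conj_transpose)
  then have HM: "?H M = M"
    by (metis M matrix_mul_assoc matrix_mul_lid matrix_mul_rid)
  define X where "X = ?H A ** M"
  have AX: "A ** X = mat 1" using GM by (simp add: X_def G_def matrix_mul_assoc)
  have "penrose A X"
    unfolding penrose_def
  proof (intro conjI)
    show "X ** A ** X = X" by (metis AX matrix_mul_assoc matrix_mul_rid)
    show "?H (X ** A) = X ** A" by (simp add: X_def conj_transpose_matrix_mult HM matrix_mul_assoc)
  qed (simp_all add: AX)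
  then show ?thesis using AX by (simp add: pinv_eqI)
qed

lemma row_vector_matrix_mult: "(A $ i) v* B = (A ** B) $ i"
  by (simp add: vec_eq_iff vector_matrix_mult_def matrix_matrix_mult_def mult.commute)

lemma axis_vector_matrix_mult: "axis i 1 v* (A :: 'a::comm_semiring_1^'n^'m) = A $ i"
  by (simp add: vec_eq_iff vector_matrix_mult_def axis_def mult_if_delta)

lemma full_row_rank_row_vector_matrix_mult_pinv:
  fixes A :: "complex^'n^'m"
  assumes "rank A = CARD('m)"
  shows "(A $ i) v* pinv A = axis i 1"
  using full_row_rank_matrix_mult_pinv[OF assms]
  by (simp add: row_vector_matrix_mult mat_def axis_def vec_eq_iff)

lemma rank_le_1_if_rows_subset_span:
  fixes A :: "'a::field^'n^'m"
  assumes "rows A \<subseteq> vec.span {r}"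
  shows "rank A \<le> 1"
  using vec.dim_le_card[OF assms] by (simp add: row_rank_def_gen)

definition replace_row :: "'a^'n^'m \<Rightarrow> 'm \<Rightarrow> 'a^'n \<Rightarrow> 'a^'n^'m" where
  "replace_row A i r = (\<chi> k. if k = i then r else A $ k)"

lemma replace_row_nth [simp]: "replace_row A i r $ k = (if k = i then r else A $ k)"
  by (simp add: replace_row_def)

lemma rank_stack_row_diff_replace_row:
  fixes A :: "'a::field^'n^'m"
  shows "rank (stack_row (A - replace_row A i r) 0) \<le> 1"
proof (rule rank_le_1_if_rows_subset_span)
  show "rows (stack_row (A - replace_row A i r) 0) \<subseteq> vec.span {A $ i - r}"
  proof
    fix v assume "v \<in> rows (stack_row (A - replace_row A i r) 0)"
    then obtain k where v: "v = row k (stack_row (A - replace_row A i r) 0)"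
      by (auto simp: rows_def)
    have "v = 0 \<or> v = A $ i - r"
      by (cases k) (auto simp: v row_def stack_row_def vec_eq_iff)
    then show "v \<in> vec.span {A $ i - r}" by (auto intro: vec.span_zero vec.span_base)
  qed
qed

lemma eclipsed_if_row_ne:
  fixes S_T :: "complex^'t^'u" and w_D :: "complex^'d"
  assumes rank: "rank S_T = CARD('u)" and "w_D \<in> qpsk_vecs" and "S_D \<in> qpsk_mats"
    and "S_D $ u \<noteq> w_D"
  shows "eclipsed S_T (S_T $ u) w_D S_D"
  unfolding eclipsed_def
proof (intro exI conjI)
  let ?S' = "replace_row S_D u w_D"
  show "?S' \<in> qpsk_mats" using assms(2,3) by (simp add: qpsk_mats_def qpsk_vecs_def)
  show "?S' \<noteq> S_D" using assms(4) by (metis replace_row_nth)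
  have "w_D - (S_T $ u v* pinv S_T) v* ?S' = 0"
    by (simp add: full_row_rank_row_vector_matrix_mult_pinv[OF rank] axis_vector_matrix_mult)
  then show "rank (stack_row (S_D - ?S') (w_D - (S_T $ u v* pinv S_T) v* ?S')) \<le> 1"
    by (simp only: rank_stack_row_diff_replace_row)
qed

lemma vec_set_finite_card:
  assumes "finite A"
  shows "finite {v :: 'a^'n. \<forall>i. v $ i \<in> A} \<and> card {v :: 'a^'n. \<forall>i. v $ i \<in> A} = card A ^ CARD('n)"
proof -
  have bij: "bij_betw vec_nth {v :: 'a^'n. \<forall>i. v $ i \<in> A} (PiE UNIV (\<lambda>_. A))"
    by (rule bij_betw_byWitness[where f' = vec_lambda])
      (force simp: vec_lambda_inverse PiE_UNIV_domain Pi_iff)+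
  show ?thesis
    using assms by (simp add: bij_betw_finite[OF bij] bij_betw_same_card[OF bij] finite_PiE card_PiE)
qed

lemma QPSK_image: "QPSK = (\<lambda>(a, b). (a + b * \<i>) / complex_of_real (sqrt 2)) ` ({-1, 1} \<times> {-1, 1})"
proof -
  have "{f a b | a b. a \<in> A \<and> b \<in> B} = case_prod f ` (A \<times> B)"
    for f :: "'a \<Rightarrow> 'b \<Rightarrow> 'c" and A B
    by auto
  then show ?thesis unfolding QPSK_def .
qed

lemma finite_QPSK: "finite QPSK"
  by (simp add: QPSK_image)

lemma card_QPSK: "card QPSK = 4"
proof -
  have "inj_on (\<lambda>(a, b). (a + b * \<i>) / complex_of_real (sqrt 2)) ({-1, 1::complex} \<times> {-1, 1})"
    by (auto simp: inj_on_def complex_eq_iff)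
  then show ?thesis
    unfolding QPSK_image by (simp add: card_image card_cartesian_product complex_eq_iff)
qed

lemma qpsk_mats_eq: "qpsk_mats = {S. \<forall>i. S $ i \<in> qpsk_vecs}"
  by (simp add: qpsk_mats_def qpsk_vecs_def)

lemma finite_qpsk_vecs: "finite (qpsk_vecs :: (complex^'d) set)"
  and card_qpsk_vecs: "card (qpsk_vecs :: (complex^'d) set) = 4 ^ CARD('d)"
  using vec_set_finite_card[OF finite_QPSK, where 'n = 'd] by (simp_all add: qpsk_vecs_def card_QPSK)

lemma finite_qpsk_mats: "finite qpsk_mats"
  unfolding qpsk_mats_eq using vec_set_finite_card[OF finite_qpsk_vecs] by blast

lemma card_row_vec_set_fixed_row:
  fixes V :: "('a^'n) set" and i :: "'m::finite"
  assumes "r \<in> V"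
  shows "card {A :: 'a^'n^'m. \<forall>k. A $ k \<in> V} = card V * card {A. (\<forall>k. A $ k \<in> V) \<and> A $ i = r}"
proof -
  let ?M = "{A :: 'a^'n^'m. \<forall>k. A $ k \<in> V}"
  let ?R = "{A. (\<forall>k. A $ k \<in> V) \<and> A $ i = r}"
  have "bij_betw (\<lambda>A. (A $ i, replace_row A i r)) ?M (V \<times> ?R)"
    by (rule bij_betw_byWitness[where f' = "\<lambda>(v, A). replace_row A i v"])
      (use assms in \<open>auto simp: vec_eq_iff\<close>)
  then show ?thesis by (simp add: bij_betw_same_card card_cartesian_product)
qed

lemma prob_pmf_of_set_ge_if_diff_subset:
  fixes k :: real
  assumes M: "finite M" "M \<noteq> {}" and B: "B \<subseteq> M" "card M = k * card B" and "M - B \<subseteq> E"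
  shows "measure_pmf.prob (pmf_of_set M) E \<ge> 1 - 1 / k"
proof -
  have pos: "0 < card M" using M by (simp add: card_gt_0_iff)
  then have "0 < k * card B" using B(2) by simp
  then have "0 < k" "0 < card B" by (auto simp: zero_less_mult_iff)
  have "card M - card B = card (M - B)" using M B by (simp add: card_Diff_subset finite_subset)
  also have "\<dots> \<le> card (M \<inter> E)" using assms by (intro card_mono) auto
  finally have "real (card M) - card B \<le> card (M \<inter> E)"
    using card_mono[OF M(1) B(1)] by linarith
  moreover have "1 - 1 / k = (real (card M) - card B) / card M"
    using \<open>0 < k\<close> \<open>0 < card B\<close> by (simp add: B(2) field_simps)
  ultimately have "1 - 1 / k \<le> card (M \<inter> E) / card M"
    using pos by (simp add: divide_right_mono)
  then show ?thesis by (simp add: measure_pmf_of_set[OF M(2,1)])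
qed

theorem theorem4:
  fixes S_T :: "complex^'t^'u" and u :: 'u and w_D :: "complex^'d"
  assumes "CARD('u) \<le> CARD('t)"
    and "rank S_T = CARD('u)"
    and "w_D \<in> qpsk_vecs"
  shows "measure_pmf.prob (pmf_of_set qpsk_mats) {S_D. eclipsed S_T (S_T $ u) w_D S_D}
           \<ge> 1 - 1 / 4 ^ CARD('d)"
proof -
  let ?M = "qpsk_mats :: (complex^'d^'u) set"
  let ?B = "{S \<in> ?M. S $ u = w_D}"
  have "card ?M = 4 ^ CARD('d) * card ?B"
    using card_row_vec_set_fixed_row[OF assms(3), of u]
    by (simp add: qpsk_mats_eq card_qpsk_vecs conj_commute)
  then have "real (card ?M) = 4 ^ CARD('d) * card ?B" by simp
  moreover have "?M \<noteq> {}"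
    using assms(3) by (auto simp: qpsk_mats_eq intro!: exI[of _ "\<chi> i. w_D"])
  moreover have "?M - ?B \<subseteq> {S_D. eclipsed S_T (S_T $ u) w_D S_D}"
    using eclipsed_if_row_ne[OF assms(2,3)] by blast
  ultimately show ?thesis
    using finite_qpsk_mats by (intro prob_pmf_of_set_ge_if_diff_subset) auto
qed

end
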